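(* Inside the quotient field $Q(\mathbb{Z}[q]^{\mathbb{N}})$ one has $$\mathbb{Z}[q]^{\mathbb{N}}[\Phi_{\mathbb{N}}^{-1}]=\mathbb{Z}[q]^{\mathbb{N}}+\mathbb{Z}[q,q^{-1}][\Phi_{\mathbb{N}}^{-1}].$$
   Context: $q$ is an indeterminate, $\Phi_n(q)$ the $n$th cyclotomic polynomial, and $\Phi_{\mathbb{N}}^*$ the multiplicative subset of $\mathbb{Z}[q]$ generated by all $\Phi_n(q)$, $n\in\mathbb{N}$. $\mathbb{Z}[q]^{\mathbb{N}}=\varprojlim_{f\in\Phi_{\mathbb{N}}^*}\mathbb{Z}[q]/(f)$; it is an integral domain in which $q$ is invertible, and the natural map $\mathbb{Z}[q,q^{-1}]\to\mathbb{Z}[q]^{\mathbb{N}}$ is injective, so $\mathbb{Q}(q)\subset Q(\mathbb{Z}[q]^{\mathbb{N}})$, where $Q(\cdot)$ denotes the quotient field. $\mathbb{Z}[q]^{\mathbb{N}}[\Phi_{\mathbb{N}}^{-1}]$ is the subring of $Q(\mathbb{Z}[q]^{\mathbb{N}})$ of fractions $f/g$ with $f\in\mathbb{Z}[q]^{\mathbb{N}}$, $g\in\Phi_{\mathbb{N}}^*$, and $\mathbb{Z}[q,q^{-1}][\Phi_{\mathbb{N}}^{-1}]$ is the subring of $\mathbb{Q}(q)$ of fractions $f/g$ with $f\in\mathbb{Z}[q,q^{-1}]$, $g\in\Phi_{\mathbb{N}}^*$. *)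

theory Defs
  imports Complex_Main "HOL-Computational_Algebra.Polynomial"
begin

definition cyclotomic_complex :: "nat \<Rightarrow> complex poly" where
  "cyclotomic_complex n =
     (\<Prod>k\<in>{k. k < n \<and> coprime k n}. [:- cis (2 * pi * real k / real n), 1:])"

definition cyclotomic :: "nat \<Rightarrow> int poly" where
  "cyclotomic n = (THE p. map_poly of_int p = cyclotomic_complex n)"

inductive_set Phi_star :: "int poly set" where
  one: "1 \<in> Phi_star"
| mult: "n \<ge> 1 \<Longrightarrow> f \<in> Phi_star \<Longrightarrow> cyclotomic n * f \<in> Phi_star"

text \<open>Elements of the inverse limit Z[q]^N = lim_{f in Phi_N^*} Z[q]/(f) are represented by
  families x with x f a representative of the f-component in Z[q]/(f); compatibility
  means that for f | g in Phi_N^* the g-component maps to the f-component.\<close>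
definition habiro :: "(int poly \<Rightarrow> int poly) \<Rightarrow> bool" where
  "habiro x \<longleftrightarrow> (\<forall>f\<in>Phi_star. \<forall>g\<in>Phi_star. f dvd g \<longrightarrow> f dvd (x g - x f))"

definition habiro_eq :: "(int poly \<Rightarrow> int poly) \<Rightarrow> (int poly \<Rightarrow> int poly) \<Rightarrow> bool" where
  "habiro_eq x y \<longleftrightarrow> (\<forall>f\<in>Phi_star. f dvd (x f - y f))"

definition q_inv_mod :: "int poly \<Rightarrow> int poly" where
  "q_inv_mod f = (SOME r. f dvd ([:0, 1:] * r - 1))"

text \<open>The image of the Laurent polynomial p(q) * q^(-k) of Z[q,q^-1] under the natural map
  Z[q,q^-1] -> Z[q]^N.\<close>
definition laurent_to_habiro :: "int poly \<Rightarrow> nat \<Rightarrow> int poly \<Rightarrow> int poly" where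
  "laurent_to_habiro p k = (\<lambda>f. p * q_inv_mod f ^ k)"

end

theory Submission
  imports Defs "HOL-Computational_Algebra.Fundamental_Theorem_Algebra"
begin

text \<open>An element x of Z[q]^N is congruent to its component x_g modulo g, and because g
  is not a zero divisor the difference is g times a compatible family a, namely
  a_f = (x_{fg} - x_g) / g. Thus x / g = a + x_g / g; the other inclusion is immediate.
  The only input on cyclotomic polynomials is that Phi_n divides q^n - 1 in Z[q] (so
  elements of Phi_N^* are nonzero and q is invertible modulo them). This follows from
  q^n - 1 = prod_{d | n} Phi_d over C by strong induction on n, since a monic integer
  polynomial divides an integer polynomial over C only if it does so over Z.\<close>

abbreviation of_int_poly :: "int poly \<Rightarrow> 'a::comm_ring_1 poly" where
  "of_int_poly \<equiv> map_poly of_int"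

lemma of_int_poly_add: "of_int_poly (p + q) = of_int_poly p + of_int_poly q"
  by (intro poly_eqI) (simp add: coeff_map_poly)

lemma of_int_poly_diff: "of_int_poly (p - q) = of_int_poly p - of_int_poly q"
  by (intro poly_eqI) (simp add: coeff_map_poly)

lemma of_int_poly_mult: "of_int_poly (p * q) = of_int_poly p * of_int_poly q"
  by (intro poly_eqI) (simp add: coeff_map_poly coeff_mult)

lemma of_int_poly_prod: "of_int_poly (\<Prod>x\<in>A. f x) = (\<Prod>x\<in>A. of_int_poly (f x))"
  by (induction A rule: infinite_finite_induct) (auto simp: of_int_poly_mult)

lemma of_int_poly_eq_iff:
  "(of_int_poly p :: 'a::{comm_ring_1,ring_char_0} poly) = of_int_poly q \<longleftrightarrow> p = q"
  by (auto simp: poly_eq_iff coeff_map_poly)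

lemma degree_of_int_poly:
  "degree (of_int_poly p :: 'a::{comm_ring_1,ring_char_0} poly) = degree p"
  by (rule degree_map_poly) simp

lemma lead_coeff_of_int_poly:
  "lead_coeff (of_int_poly p :: 'a::{comm_ring_1,ring_char_0} poly) = of_int (lead_coeff p)"
  by (simp add: degree_of_int_poly coeff_map_poly)

lemma of_int_poly_cofactor_monic:
  fixes P Q :: "int poly" and C :: "'a::{idom,ring_char_0} poly"
  assumes monic: "lead_coeff Q = 1" and factor: "of_int_poly P = of_int_poly Q * C"
  shows "\<exists>S. C = of_int_poly S \<and> P = Q * S"
proof -
  have Q: "Q \<noteq> 0" using monic by auto
  obtain S R where "pseudo_divmod P Q = (S, R)" by (metis surj_pair)
  with pseudo_divmod[OF Q] monic
  have division: "P = Q * S + R" and R: "R = 0 \<or> degree R < degree Q" by auto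
  have "of_int_poly R = of_int_poly P - of_int_poly Q * (of_int_poly S :: 'a poly)"
    using division by (simp add: of_int_poly_add of_int_poly_mult)
  with factor have remainder: "of_int_poly Q * (C - of_int_poly S) = (of_int_poly R :: 'a poly)"
    by (simp add: algebra_simps)
  have "C = of_int_poly S"
  proof (rule ccontr)
    assume "C \<noteq> of_int_poly S"
    moreover have "(of_int_poly Q :: 'a poly) \<noteq> 0"
      using Q of_int_poly_eq_iff[of Q 0] by auto
    ultimately have "degree (of_int_poly R :: 'a poly) = degree Q + degree (C - of_int_poly S)"
      and "R \<noteq> 0"
      using remainder of_int_poly_eq_iff[of R 0, where 'a = 'a]
      by (auto simp: degree_mult_eq degree_of_int_poly simp flip: remainder)
    with R show False by (simp add: degree_of_int_poly)
  qed
  moreover from this have "R = 0"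
    using remainder of_int_poly_eq_iff[of R 0, where 'a = 'a] by simp
  ultimately show ?thesis using division by auto
qed

lemma X_power_minus_1_eq_prod_roots_unity:
  assumes n: "n > 0"
  shows "(monom 1 n - 1 :: complex poly) = (\<Prod>k<n. [:- cis (2 * pi * real k / real n), 1:])"
proof -
  define F :: "complex poly" where "F = monom 1 n - 1"
  have poly_F: "poly F z = z ^ n - 1" for z by (simp add: F_def poly_monom)
  have "coeff F n = 1" using n by (simp add: F_def)
  moreover have "degree F \<le> n" by (rule degree_le) (auto simp: F_def)
  ultimately have "degree F = n" by (metis le_antisym le_degree zero_neq_one)
  with \<open>coeff F n = 1\<close> have lead_F: "lead_coeff F = 1" by simp
  have squarefree: "rsquarefree F"
    unfolding rsquarefree_roots
  proof (intro allI notI)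
    fix z assume z: "poly F z = 0 \<and> poly (pderiv F) z = 0"
    then have "z \<noteq> 0" using n by (auto simp: poly_F power_0_left)
    moreover have "of_nat n * z ^ (n - 1) = 0"
      using z by (simp add: F_def pderiv_diff pderiv_monom poly_monom)
    ultimately show False using n by simp
  qed
  have "F = (\<Prod>z|poly F z = 0. [:-z, 1:])"
    using complex_poly_decompose_rsquarefree[OF squarefree] lead_F by simp
  also have "\<dots> = (\<Prod>z\<in>{z. z ^ n = 1}. [:-z, 1:])" by (simp add: poly_F)
  also have "\<dots> = (\<Prod>k<n. [:- cis (2 * pi * real k / real n), 1:])"
    using prod.reindex_bij_betw[OF bij_betw_roots_unity[OF n], of "\<lambda>z. [:-z, 1:]"] by simp
  finally show ?thesis by (simp add: F_def)
qed

lemma gcd_mult_div_eq: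
  fixes n d j :: nat
  assumes "d dvd n" and "coprime j d"
  shows "gcd (j * (n div d)) n = n div d"
proof -
  have "gcd (j * (n div d)) n = gcd ((n div d) * j) ((n div d) * d)"
    using assms(1) by (simp add: mult.commute)
  also have "\<dots> = (n div d) * gcd j d" by (simp add: gcd_mult_distrib_nat)
  finally show ?thesis using assms(2) by simp
qed

text \<open>The fractions k/n, k < n, are exactly the reduced fractions j/d with d dividing n.\<close>
lemma bij_betw_divisor_coprime_pairs:
  fixes n :: nat
  assumes n: "n > 0"
  shows "bij_betw (\<lambda>(d, j). j * (n div d))
           (SIGMA d:{d. d dvd n}. {j. j < d \<and> coprime j d}) {..<n}"
proof (rule bij_betw_byWitness[where f' = "\<lambda>k. (n div gcd k n, k div gcd k n)"], safe)
  fix d j assume d: "d dvd n" and j: "j < d" "coprime j d"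
  have "n div d > 0" using d n by (auto elim!: dvdE)
  with d j n show "n div gcd (j * (n div d)) n = d" "j * (n div d) div gcd (j * (n div d)) n = j"
    by (simp_all add: gcd_mult_div_eq div_div_eq_right)
  have "j * (n div d) < d * (n div d)" using j \<open>n div d > 0\<close> by simp
  with d show "j * (n div d) < n" by simp
next
  fix k assume k: "k < n"
  define g where "g = gcd k n"
  have g: "g > 0" "g dvd k" "g dvd n" using n by (simp_all add: g_def)
  show "k div g * (n div (n div g)) = k"
    using g n by (simp add: div_div_eq_right)
  show "n div g dvd n" using g by (auto elim!: dvdE)
  show "k div g < n div g" using k g by (auto elim!: dvdE)
  show "coprime (k div g) (n div g)" using n unfolding g_def by (intro div_gcd_coprime) simp
qed

lemma X_power_minus_1_eq_prod_cyclotomic_complex: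
  assumes n: "n > 0"
  shows "(monom 1 n - 1 :: complex poly) = (\<Prod>d | d dvd n. cyclotomic_complex d)"
proof -
  define root_factor where "root_factor k = [:- cis (2 * pi * real k / real n), 1:]" for k
  have "(monom 1 n - 1 :: complex poly) = (\<Prod>k<n. root_factor k)"
    using X_power_minus_1_eq_prod_roots_unity[OF n] by (simp add: root_factor_def)
  also have "\<dots> = (\<Prod>(d, j)\<in>(SIGMA d:{d. d dvd n}. {j. j < d \<and> coprime j d}).
                     root_factor (j * (n div d)))"
    using prod.reindex_bij_betw[OF bij_betw_divisor_coprime_pairs[OF n], of root_factor]
    by (simp add: case_prod_unfold)
  also have "\<dots> = (\<Prod>d | d dvd n. \<Prod>j | j < d \<and> coprime j d. root_factor (j * (n div d)))"
    using n by (subst prod.Sigma) (simp_all add: split_def)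
  also have "\<dots> = (\<Prod>d | d dvd n. cyclotomic_complex d)"
    unfolding cyclotomic_complex_def
  proof (intro prod.cong refl)
    fix d j assume "d \<in> {d. d dvd n}"
    then have "real (j * (n div d)) / real n = real j / real d"
      using n by (auto elim!: dvdE simp: field_simps)
    then show "root_factor (j * (n div d)) = [:- cis (2 * pi * real j / real d), 1:]"
      unfolding root_factor_def by (metis times_divide_eq_right)
  qed
  finally show ?thesis .
qed

lemma lead_coeff_cyclotomic_complex: "lead_coeff (cyclotomic_complex n) = 1"
  unfolding cyclotomic_complex_def lead_coeff_prod by simp

lemma cyclotomic_complex_integral:
  assumes "n > 0"
  shows "\<exists>p. of_int_poly p = cyclotomic_complex n \<and> p dvd monom 1 n - 1"
  using assms
proof (induction n rule: less_induct)
  case (less n)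
  define D where "D = {d. d dvd n \<and> d < n}"
  have "\<forall>d\<in>D. \<exists>p. of_int_poly p = cyclotomic_complex d"
  proof
    fix d assume "d \<in> D"
    then have "0 < d" "d < n" using less.prems by (auto simp: D_def dvd_pos_nat)
    then show "\<exists>p. of_int_poly p = cyclotomic_complex d" using less.IH by blast
  qed
  then obtain P where P: "\<forall>d\<in>D. of_int_poly (P d) = cyclotomic_complex d" by metis
  define Q where "Q = (\<Prod>d\<in>D. P d)"
  have Q: "of_int_poly Q = (\<Prod>d\<in>D. cyclotomic_complex d)"
    unfolding Q_def of_int_poly_prod using P by simp
  then have "of_int (lead_coeff Q) = (1 :: complex)"
    by (simp flip: lead_coeff_of_int_poly add: lead_coeff_prod lead_coeff_cyclotomic_complex)
  then have "lead_coeff Q = 1" by simp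
  moreover have "{d. d dvd n} = insert n D"
    unfolding D_def using less.prems by (auto dest: dvd_imp_le)
  then have "of_int_poly (monom 1 n - 1) = of_int_poly Q * cyclotomic_complex n"
    using X_power_minus_1_eq_prod_cyclotomic_complex[OF less.prems] Q
    by (simp add: of_int_poly_diff map_poly_monom D_def mult.commute)
  ultimately obtain S where "cyclotomic_complex n = of_int_poly S" "monom 1 n - 1 = Q * S"
    using of_int_poly_cofactor_monic by blast
  then show ?case by auto
qed

lemma cyclotomic_dvd_X_power_minus_1:
  assumes "n > 0"
  shows "cyclotomic n dvd monom 1 n - 1"
proof -
  obtain p where p: "of_int_poly p = cyclotomic_complex n" "p dvd monom 1 n - 1"
    using cyclotomic_complex_integral[OF assms] by blast
  have "cyclotomic n = p"
    unfolding cyclotomic_def using p(1)[symmetric] by (intro the_equality) (auto simp: of_int_poly_eq_iff)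
  with p(2) show ?thesis by simp
qed

lemma Phi_star_nonzero: "f \<in> Phi_star \<Longrightarrow> f \<noteq> 0"
proof (induction rule: Phi_star.induct)
  case (mult n f)
  have "coeff (monom 1 n - 1 :: int poly) n = 1" using mult.hyps by simp
  then have "monom 1 n - 1 \<noteq> (0 :: int poly)" by (metis coeff_0 zero_neq_one)
  then have "cyclotomic n \<noteq> 0"
    using cyclotomic_dvd_X_power_minus_1[of n] mult.hyps by auto
  with mult.IH show ?case by simp
qed simp

lemma Phi_star_mult: "f \<in> Phi_star \<Longrightarrow> g \<in> Phi_star \<Longrightarrow> f * g \<in> Phi_star"
  by (induction rule: Phi_star.induct) (auto simp: mult.assoc intro: Phi_star.mult)

lemma mult_dvd_inverse_mod:
  fixes a :: "'a::comm_ring_1"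
  assumes "f dvd a * r - 1" and "g dvd a * s - 1"
  shows "f * g dvd a * (r + s - a * r * s) - 1"
proof -
  have "f * g dvd (a * r - 1) * (a * s - 1)" using assms by (rule mult_dvd_mono)
  also have "(a * r - 1) * (a * s - 1) = - (a * (r + s - a * r * s) - 1)"
    by (simp add: algebra_simps)
  finally show ?thesis by (simp only: dvd_minus_iff)
qed

lemma dvd_diff_inverses_mod:
  fixes a :: "'a::comm_ring_1"
  assumes "f dvd a * r - 1" and "f dvd a * s - 1"
  shows "f dvd r - s"
proof -
  have "r - s = s * (a * r - 1) - r * (a * s - 1)" by (simp add: algebra_simps)
  also have "f dvd \<dots>" using assms by simp
  finally show ?thesis .
qed

lemma Phi_star_X_invertible: "f \<in> Phi_star \<Longrightarrow> \<exists>r. f dvd [:0, 1:] * r - 1"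
proof (induction rule: Phi_star.induct)
  case one
  then show ?case by simp
next
  case (mult n f)
  have "monom 1 n = [:0, 1:] * (monom 1 (n - 1) :: int poly)"
    using mult.hyps by (cases n) (auto simp: monom_Suc)
  then have "cyclotomic n dvd [:0, 1:] * monom 1 (n - 1) - 1"
    using cyclotomic_dvd_X_power_minus_1[of n] mult.hyps by simp
  with mult.IH show ?case by (meson mult_dvd_inverse_mod)
qed

lemma dvd_X_mult_q_inv_mod: "f \<in> Phi_star \<Longrightarrow> f dvd [:0, 1:] * q_inv_mod f - 1"
  unfolding q_inv_mod_def using Phi_star_X_invertible by (rule someI_ex)

lemma habiro_laurent_to_habiro: "habiro (laurent_to_habiro p k)"
  unfolding habiro_def laurent_to_habiro_def
proof (intro ballI impI)
  fix f g assume f: "f \<in> Phi_star" and g: "g \<in> Phi_star" and "f dvd g"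
  then have "f dvd [:0, 1:] * q_inv_mod g - 1"
    using dvd_X_mult_q_inv_mod dvd_trans by blast
  with f have "f dvd q_inv_mod g - q_inv_mod f"
    by (meson dvd_X_mult_q_inv_mod dvd_diff_inverses_mod)
  also have "q_inv_mod g - q_inv_mod f dvd q_inv_mod g ^ k - q_inv_mod f ^ k"
    by (simp add: power_diff_sumr2)
  finally show "f dvd p * q_inv_mod g ^ k - p * q_inv_mod f ^ k"
    by (simp flip: right_diff_distrib)
qed

lemma habiro_add: "habiro x \<Longrightarrow> habiro y \<Longrightarrow> habiro (\<lambda>f. x f + y f)"
  unfolding habiro_def by (metis (no_types, lifting) add_diff_add dvd_add)

lemma habiro_mult_right: "habiro x \<Longrightarrow> habiro (\<lambda>f. x f * c)"
  unfolding habiro_def by (simp flip: left_diff_distrib)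

lemma habiro_eq_mult_right: "habiro_eq x y \<Longrightarrow> habiro_eq (\<lambda>f. x f * c) (\<lambda>f. y f * c)"
  unfolding habiro_eq_def by (simp flip: left_diff_distrib)

lemma habiro_eq_component_plus_multiple:
  assumes x: "habiro x" and g: "g \<in> Phi_star"
  obtains a where "habiro a" and "habiro_eq x (\<lambda>f. x g + g * a f)"
proof
  define a where "a f = (x (f * g) - x g) div g" for f
  have g_a: "g * a f = x (f * g) - x g" if "f \<in> Phi_star" for f
  proof -
    have "g dvd x (f * g) - x g"
      using x g Phi_star_mult[OF that g] unfolding habiro_def by auto
    then show ?thesis unfolding a_def by simp
  qed
  show "habiro a" unfolding habiro_def
  proof (intro ballI impI)
    fix f f' assume f: "f \<in> Phi_star" and f': "f' \<in> Phi_star" and "f dvd f'"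
    then have "f * g dvd x (f' * g) - x (f * g)"
      using x g unfolding habiro_def by (simp add: Phi_star_mult)
    also have "x (f' * g) - x (f * g) = g * (a f' - a f)"
      using g_a[OF f] g_a[OF f'] by (simp add: algebra_simps)
    finally show "f dvd a f' - a f"
      using Phi_star_nonzero[OF g] by (simp add: mult.commute)
  qed
  show "habiro_eq x (\<lambda>f. x g + g * a f)" unfolding habiro_eq_def
  proof
    fix f assume f: "f \<in> Phi_star"
    have "f dvd x (f * g) - x f"
      using x f g unfolding habiro_def by (simp add: Phi_star_mult)
    then have "f dvd x f - x (f * g)" by (metis dvd_minus_iff minus_diff_eq)
    then show "f dvd x f - (x g + g * a f)" using g_a[OF f] by simp
  qed
qed

theorem proposition7p4:
  shows "(\<forall>x g. habiro x \<and> g \<in> Phi_star \<longrightarrow>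
            (\<exists>a p k h. habiro a \<and> h \<in> Phi_star \<and>
               habiro_eq (\<lambda>f. x f * h)
                         (\<lambda>f. (a f * h + laurent_to_habiro p k f) * g)))
       \<and> (\<forall>a p k h. habiro a \<and> h \<in> Phi_star \<longrightarrow>
            (\<exists>x g. habiro x \<and> g \<in> Phi_star \<and>
               habiro_eq (\<lambda>f. x f * h)
                         (\<lambda>f. (a f * h + laurent_to_habiro p k f) * g)))"
proof (intro conjI allI impI; elim conjE)
  fix x g assume "habiro x" and g: "g \<in> Phi_star"
  then obtain a where a: "habiro a" and x_eq: "habiro_eq x (\<lambda>f. x g + g * a f)"
    by (rule habiro_eq_component_plus_multiple)
  from x_eq have "habiro_eq (\<lambda>f. x f * g) (\<lambda>f. (x g + g * a f) * g)"
    by (rule habiro_eq_mult_right)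
  moreover have "(\<lambda>f. (x g + g * a f) * g) = (\<lambda>f. (a f * g + laurent_to_habiro (x g) 0 f) * g)"
    by (simp add: laurent_to_habiro_def algebra_simps)
  ultimately show "\<exists>a p k h. habiro a \<and> h \<in> Phi_star \<and>
      habiro_eq (\<lambda>f. x f * h) (\<lambda>f. (a f * h + laurent_to_habiro p k f) * g)"
    using a g by metis
next
  fix a p k h assume "habiro a" and h: "h \<in> Phi_star"
  then have "habiro (\<lambda>f. a f * h + laurent_to_habiro p k f)"
    by (intro habiro_add habiro_mult_right habiro_laurent_to_habiro)
  with h show "\<exists>x g. habiro x \<and> g \<in> Phi_star \<and>
      habiro_eq (\<lambda>f. x f * h) (\<lambda>f. (a f * h + laurent_to_habiro p k f) * g)"
    unfolding habiro_eq_def by fastforce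
qed

end
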